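(* For every even integer $n\ge 4$ there exist a boolean classifier $\kappa:\{0,1\}^n\to\{0,1\}$ and a point $\mathbf v\in\{0,1\}^n$ such that, for the sample $(\mathbf v,\kappa(\mathbf v))$, there exist an irrelevant feature $i_1\in\mathcal F$ with $\mathrm{Sv}(i_1)\neq 0$ and a relevant feature $i_2\in\mathcal F\setminus\{i_1\}$ with $\mathrm{Sv}(i_2)=0$ (issue I4).
   Context: Let $\mathcal F=\{1,\dots,n\}$. A boolean classifier is a non-constant function $\kappa:\{0,1\}^n\to\{0,1\}$; a sample is a pair $(\mathbf v,c)$ with $\mathbf v\in\{0,1\}^n$ and $c=\kappa(\mathbf v)$. For $\mathcal S\subseteq\mathcal F$ let $\Upsilon(\mathcal S;\mathbf v)=\{\mathbf x\in\{0,1\}^n : x_j=v_j \text{ for all } j\in\mathcal S\}$ and, for any function $g$ on $\{0,1\}^n$, $\mathbf E[g\mid \mathbf x_{\mathcal S}=\mathbf v_{\mathcal S}]=|\Upsilon(\mathcal S;\mathbf v)|^{-1}\sum_{\mathbf x\in\Upsilon(\mathcal S;\mathbf v)}g(\mathbf x)$ (uniform distribution, independent features). The characteristic function is $\upsilon(\mathcal S)=\mathbf E[\kappa\mid\mathbf x_{\mathcal S}=\mathbf v_{\mathcal S}]$, and the SHAP score of feature $i$ is $\mathrm{Sv}(i)=\sum_{\mathcal S\subseteq\mathcal F\setminus\{i\}}\frac{|\mathcal S|!\,(n-|\mathcal S|-1)!}{n!}\big(\upsilon(\mathcal S\cup\{i\})-\upsilon(\mathcal S)\big)$. The similarity predicate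 is $\sigma(\mathbf x)=1$ if $\kappa(\mathbf x)=\kappa(\mathbf v)$ and $0$ otherwise. A set $\mathcal S\subseteq\mathcal F$ is a weak abductive explanation (WAXp) if $\mathbf E[\sigma\mid\mathbf x_{\mathcal S}=\mathbf v_{\mathcal S}]=1$ (i.e. $\kappa(\mathbf x)=\kappa(\mathbf v)$ for all $\mathbf x\in\Upsilon(\mathcal S;\mathbf v)$); an abductive explanation (AXp) is a WAXp $\mathcal S$ such that $\mathcal S\setminus\{t\}$ is not a WAXp for every $t\in\mathcal S$. A feature is relevant if it belongs to at least one AXp, and irrelevant otherwise. *)

theory Defs
  imports Complex_Main
begin

text \<open>A point of {0,1}^n is a function nat => bool which is
  False outside {1..n} (so the set of points is in bijection with {0,1}^n).
  A classifier is a function on points returning bool (True = 1, False = 0).\<close>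

definition points :: "nat \<Rightarrow> (nat \<Rightarrow> bool) set" where
  "points n = {x. \<forall>j. j \<notin> {1..n} \<longrightarrow> x j = False}"

definition feats :: "nat \<Rightarrow> nat set" where
  "feats n = {1..n}"

definition is_classifier :: "nat \<Rightarrow> ((nat \<Rightarrow> bool) \<Rightarrow> bool) \<Rightarrow> bool" where
  "is_classifier n \<kappa> \<longleftrightarrow> (\<exists>x\<in>points n. \<exists>y\<in>points n. \<kappa> x \<noteq> \<kappa> y)"

definition Upsilon :: "nat \<Rightarrow> nat set \<Rightarrow> (nat \<Rightarrow> bool) \<Rightarrow> (nat \<Rightarrow> bool) set" where
  "Upsilon n S v = {x \<in> points n. \<forall>j\<in>S. x j = v j}"

definition cond_exp :: "nat \<Rightarrow> ((nat \<Rightarrow> bool) \<Rightarrow> real) \<Rightarrow> nat set \<Rightarrow> (nat \<Rightarrow> bool) \<Rightarrow> real" where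
  "cond_exp n g S v = (\<Sum>x\<in>Upsilon n S v. g x) / real (card (Upsilon n S v))"

definition charfun :: "nat \<Rightarrow> ((nat \<Rightarrow> bool) \<Rightarrow> bool) \<Rightarrow> (nat \<Rightarrow> bool) \<Rightarrow> nat set \<Rightarrow> real" where
  "charfun n \<kappa> v S = cond_exp n (\<lambda>x. of_bool (\<kappa> x)) S v"

definition shap :: "nat \<Rightarrow> ((nat \<Rightarrow> bool) \<Rightarrow> bool) \<Rightarrow> (nat \<Rightarrow> bool) \<Rightarrow> nat \<Rightarrow> real" where
  "shap n \<kappa> v i = (\<Sum>S\<in>Pow (feats n - {i}).
     (fact (card S) * fact (n - card S - 1) / fact n) *
     (charfun n \<kappa> v (S \<union> {i}) - charfun n \<kappa> v S))"

definition sigma :: "((nat \<Rightarrow> bool) \<Rightarrow> bool) \<Rightarrow> (nat \<Rightarrow> bool) \<Rightarrow> (nat \<Rightarrow> bool) \<Rightarrow> real" where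
  "sigma \<kappa> v x = (if \<kappa> x = \<kappa> v then 1 else 0)"

definition WAXp :: "nat \<Rightarrow> ((nat \<Rightarrow> bool) \<Rightarrow> bool) \<Rightarrow> (nat \<Rightarrow> bool) \<Rightarrow> nat set \<Rightarrow> bool" where
  "WAXp n \<kappa> v S \<longleftrightarrow> S \<subseteq> feats n \<and> cond_exp n (sigma \<kappa> v) S v = 1"

definition AXp :: "nat \<Rightarrow> ((nat \<Rightarrow> bool) \<Rightarrow> bool) \<Rightarrow> (nat \<Rightarrow> bool) \<Rightarrow> nat set \<Rightarrow> bool" where
  "AXp n \<kappa> v S \<longleftrightarrow> WAXp n \<kappa> v S \<and> (\<forall>t\<in>S. \<not> WAXp n \<kappa> v (S - {t}))"

definition relevant :: "nat \<Rightarrow> ((nat \<Rightarrow> bool) \<Rightarrow> bool) \<Rightarrow> (nat \<Rightarrow> bool) \<Rightarrow> nat \<Rightarrow> bool" where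
  "relevant n \<kappa> v i \<longleftrightarrow> (\<exists>S. AXp n \<kappa> v S \<and> i \<in> S)"

end

theory Submission
  imports Defs "HOL-Combinatorics.Transposition"
begin

text \<open>Take \<open>\<kappa>(x) = \<not>x\<^sub>2 \<and> ((\<not>x\<^sub>1 \<and> x\<^sub>3 \<and> x\<^sub>4) \<or> (x\<^sub>1 \<and> \<not>x\<^sub>3 \<and> \<not>x\<^sub>4))\<close> at the
  point \<open>v = 0\<close>, so \<open>\<kappa>(v) = 0\<close>. Setting \<open>x\<^sub>2 = 1\<close> forces the prediction 0, so
  feature 2 can be dropped from every WAXp and lies in no AXp; yet fixing \<open>x\<^sub>2 = 0\<close>
  never lowers the expected value and strictly raises it for the empty coalition, so
  \<open>Sv(2) > 0\<close>. The set \<open>{1,3}\<close> is an AXp, so feature 3 is relevant, but swapping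
  features 1 and 4 maps every coalition to one of the same size on which the marginal
  contribution of feature 3 has the opposite sign, so \<open>Sv(3) = 0\<close>.\<close>

lemma points_eq_image_Pow: "points n = (\<lambda>B j. j \<in> B) ` Pow {1..n}"
proof
  show "points n \<subseteq> (\<lambda>B j. j \<in> B) ` Pow {1..n}"
  proof
    fix x assume x: "x \<in> points n"
    have "x = (\<lambda>j. j \<in> {j. x j})" by auto
    moreover have "{j. x j} \<subseteq> {1..n}" using x unfolding points_def by auto
    ultimately show "x \<in> (\<lambda>B j. j \<in> B) ` Pow {1..n}" by blast
  qed
qed (auto simp: points_def)

lemma finite_Upsilon: "finite (Upsilon n S v)"
  unfolding Upsilon_def points_eq_image_Pow by simp

lemma WAXp_iff:
  assumes "v \<in> points n"
  shows "WAXp n \<kappa> v S \<longleftrightarrow> S \<subseteq> feats n \<and> (\<forall>x\<in>Upsilon n S v. \<kappa> x = \<kappa> v)"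
proof -
  let ?U = "Upsilon n S v"
  have fin: "finite ?U" by (rule finite_Upsilon)
  have "v \<in> ?U" using assms unfolding Upsilon_def by simp
  then have ne: "card ?U > 0" using fin card_gt_0_iff by blast
  have "cond_exp n (sigma \<kappa> v) S v = 1 \<longleftrightarrow> (\<Sum>x\<in>?U. sigma \<kappa> v x) = real (card ?U)"
    unfolding cond_exp_def using ne by (auto simp add: divide_eq_1_iff)
  also have "\<dots> \<longleftrightarrow> (\<Sum>x\<in>?U. 1 - sigma \<kappa> v x) = 0"
    by (auto simp add: sum_subtractf)
  also have "\<dots> \<longleftrightarrow> (\<forall>x\<in>?U. 1 - sigma \<kappa> v x = 0)"
    using fin by (intro sum_nonneg_eq_0_iff) (auto simp: sigma_def)
  also have "\<dots> \<longleftrightarrow> (\<forall>x\<in>?U. \<kappa> x = \<kappa> v)"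
    by (auto simp: sigma_def)
  finally show ?thesis unfolding WAXp_def by blast
qed

lemma not_relevant_if_deviation_keeps_prediction:
  assumes v: "v \<in> points n"
    and keep: "\<And>x. x \<in> points n \<Longrightarrow> x i \<noteq> v i \<Longrightarrow> \<kappa> x = \<kappa> v"
  shows "\<not> relevant n \<kappa> v i"
proof
  assume "relevant n \<kappa> v i"
  then obtain S where "AXp n \<kappa> v S" and "i \<in> S" unfolding relevant_def by blast
  then have waxp: "WAXp n \<kappa> v S" and not_waxp: "\<not> WAXp n \<kappa> v (S - {i})"
    unfolding AXp_def by auto
  have "\<kappa> x = \<kappa> v" if x: "x \<in> Upsilon n (S - {i}) v" for x
  proof (cases "x i = v i")
    case True
    then have "x \<in> Upsilon n S v" using x unfolding Upsilon_def by auto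
    then show ?thesis using waxp WAXp_iff[OF v] by blast
  next
    case False
    then show ?thesis using x keep unfolding Upsilon_def by blast
  qed
  then have "WAXp n \<kappa> v (S - {i})" using waxp WAXp_iff[OF v] by blast
  with not_waxp show False by contradiction
qed

lemma card_Pow_filter_Int:
  assumes "finite A"
  shows "card {B \<in> Pow A. P (B \<inter> K)} = card {C. C \<subseteq> A \<inter> K \<and> P C} * 2 ^ card (A - K)"
proof -
  have recombine: "(C \<union> E) \<inter> K = C" if "C \<subseteq> A \<inter> K" "E \<subseteq> A - K" for C E
    using that by auto
  have "bij_betw (\<lambda>B. (B \<inter> K, B - K)) {B \<in> Pow A. P (B \<inter> K)}
          ({C. C \<subseteq> A \<inter> K \<and> P C} \<times> Pow (A - K))"
    by (intro bij_betw_byWitness[where f' = "\<lambda>(C, E). C \<union> E"]) (auto simp: recombine)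
  then have "card {B \<in> Pow A. P (B \<inter> K)} = card ({C. C \<subseteq> A \<inter> K \<and> P C} \<times> Pow (A - K))"
    by (rule bij_betw_same_card)
  also have "\<dots> = card {C. C \<subseteq> A \<inter> K \<and> P C} * 2 ^ card (A - K)"
    using assms by (simp add: card_cartesian_product card_Pow)
  finally show ?thesis .
qed

text \<open>The free features outside \<open>K\<close> contribute the same factor \<open>2 ^ card (A - K)\<close> to the
  sum and to the size of \<open>Upsilon\<close>, so it cancels.\<close>

lemma charfun_junta:
  assumes K: "K \<subseteq> {1..n}" and junta: "\<And>x. \<kappa> x = P {j \<in> K. x j}"
  shows "charfun n \<kappa> (\<lambda>_. False) S = real (card {C. C \<subseteq> K - S \<and> P C}) / 2 ^ card (K - S)"
proof -
  define A where "A = {1..n} - S"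
  have finA: "finite A" unfolding A_def by simp
  have AK: "A \<inter> K = K - S" using K unfolding A_def by auto
  let ?f = "\<lambda>B j. j \<in> (B::nat set)"
  have U: "Upsilon n S (\<lambda>_. False) = ?f ` Pow A"
    unfolding Upsilon_def points_eq_image_Pow A_def by auto
  have inj: "inj_on ?f (Pow A)"
    by (auto simp: inj_on_def fun_eq_iff)
  have "card (Upsilon n S (\<lambda>_. False)) = 2 ^ card A"
    unfolding U using card_image[OF inj] finA by (simp add: card_Pow)
  also have "card A = card (K - S) + card (A - K)"
    using card_Int_Diff[OF finA, of K] AK by simp
  finally have card_U: "card (Upsilon n S (\<lambda>_. False)) = 2 ^ card (K - S) * 2 ^ card (A - K)"
    by (simp add: power_add)
  have "(\<Sum>x\<in>Upsilon n S (\<lambda>_. False). of_bool (\<kappa> x) :: real)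
          = (\<Sum>B\<in>Pow A. of_bool (P (B \<inter> K)))"
    unfolding U sum.reindex[OF inj] by (simp add: junta Int_def conj_commute)
  also have "\<dots> = real (card {B \<in> Pow A. P (B \<inter> K)})"
    using finA by (subst sum_of_bool_eq) (simp_all add: Int_def)
  also have "\<dots> = real (card {C. C \<subseteq> K - S \<and> P C} * 2 ^ card (A - K))"
    unfolding card_Pow_filter_Int[OF finA] AK ..
  finally show ?thesis
    unfolding charfun_def cond_exp_def card_U by simp
qed

lemma sum_Pow_eq_0_if_involution_negates:
  fixes f :: "'a set \<Rightarrow> real"
  assumes closed: "\<And>j. j \<in> A \<Longrightarrow> h j \<in> A" and invol: "\<And>j. h (h j) = j"
    and negates: "\<And>S. S \<subseteq> A \<Longrightarrow> f (h ` S) = - f S"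
  shows "sum f (Pow A) = 0"
proof -
  have hh: "h ` h ` S = S" for S by (simp add: image_image invol)
  have "sum f (Pow A) = sum (\<lambda>S. f (h ` S)) (Pow A)"
    by (rule sum.reindex_bij_witness[where i = "image h" and j = "image h"])
       (auto simp: hh closed)
  also have "\<dots> = - sum f (Pow A)"
    by (simp add: negates sum_negf)
  finally show ?thesis by simp
qed

lemma shap_eq_0_if_transpose_negates_marginals:
  assumes ab: "a \<in> feats n - {i}" "b \<in> feats n - {i}"
    and negates: "\<And>S. S \<subseteq> feats n - {i} \<Longrightarrow>
      charfun n \<kappa> v (transpose a b ` S \<union> {i}) - charfun n \<kappa> v (transpose a b ` S)
        = - (charfun n \<kappa> v (S \<union> {i}) - charfun n \<kappa> v S)"
  shows "shap n \<kappa> v i = 0"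
  unfolding shap_def
proof (rule sum_Pow_eq_0_if_involution_negates)
  show "transpose a b j \<in> feats n - {i}" if "j \<in> feats n - {i}" for j
    using that ab by (auto simp: transpose_def)
  show "transpose a b (transpose a b j) = j" for j by simp
  fix S assume S: "S \<subseteq> feats n - {i}"
  have "card (transpose a b ` S) = card S"
    by (simp add: card_image)
  then show "fact (card (transpose a b ` S)) * fact (n - card (transpose a b ` S) - 1) / fact n *
      (charfun n \<kappa> v (transpose a b ` S \<union> {i}) - charfun n \<kappa> v (transpose a b ` S)) =
    - (fact (card S) * fact (n - card S - 1) / fact n *
      (charfun n \<kappa> v (S \<union> {i}) - charfun n \<kappa> v S))"
    by (simp only: negates[OF S] mult_minus_right)
qed

definition kappa4 :: "nat set \<Rightarrow> bool" where
  "kappa4 C \<longleftrightarrow> 2 \<notin> C \<and> ((1 \<notin> C \<and> 3 \<in> C \<and> 4 \<in> C) \<or> (1 \<in> C \<and> 3 \<notin> C \<and> 4 \<notin> C))"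

definition kappa :: "(nat \<Rightarrow> bool) \<Rightarrow> bool" where
  "kappa x = kappa4 {j \<in> {1,2,3,4}. x j}"

text \<open>The value of the characteristic function of \<open>kappa\<close> at the all-zero point on a
  coalition \<open>S\<close>, where the arguments record whether features 1, 2, 3, 4 lie in \<open>S\<close>.\<close>

definition kappa_mean :: "bool \<Rightarrow> bool \<Rightarrow> bool \<Rightarrow> bool \<Rightarrow> real" where
  "kappa_mean a b c d = (of_bool (\<not> c \<and> \<not> d) + of_bool (\<not> a)) /
     2 ^ (of_bool (\<not> a) + of_bool (\<not> b) + of_bool (\<not> c) + of_bool (\<not> d))"

lemma card_kappa4_witnesses:
  assumes "R \<subseteq> {1,2,3,4}"
  shows "card {C. C \<subseteq> R \<and> kappa4 C} = of_bool (3 \<in> R \<and> 4 \<in> R) + of_bool (1 \<in> R)"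
proof -
  have "{C. C \<subseteq> R \<and> kappa4 C}
      = (if 3 \<in> R \<and> 4 \<in> R then {{3,4}} else {}) \<union> (if 1 \<in> R then {{1}} else {})"
  proof (intro equalityI subsetI)
    fix C assume "C \<in> {C. C \<subseteq> R \<and> kappa4 C}"
    then have C: "C \<subseteq> {1,2,3,4}" "C \<subseteq> R" "kappa4 C" using assms by auto
    then have "C = {1} \<or> C = {3,4}" unfolding kappa4_def by auto
    then show "C \<in> (if 3 \<in> R \<and> 4 \<in> R then {{3,4}} else {}) \<union> (if 1 \<in> R then {{1}} else {})"
      using C by auto
  qed (auto split: if_splits simp: kappa4_def)
  then show ?thesis by simp
qed

lemma card_1234_Diff:
  "card ({1,2,3,4::nat} - S)
     = of_bool (1 \<notin> S) + of_bool (2 \<notin> S) + of_bool (3 \<notin> S) + of_bool (4 \<notin> S)"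
proof -
  have "card ({1,2,3,4::nat} - S) = card ({1,2,3,4::nat} \<inter> {j. j \<notin> S})"
    by (simp add: Diff_eq Compl_eq)
  also have "\<dots> = (\<Sum>j\<in>{1,2,3,4::nat}. of_bool (j \<notin> S))" by simp
  finally show ?thesis by simp
qed

lemma charfun_kappa:
  assumes "n \<ge> 4"
  shows "charfun n kappa (\<lambda>_. False) S = kappa_mean (1 \<in> S) (2 \<in> S) (3 \<in> S) (4 \<in> S)"
proof -
  have "{1,2,3,4::nat} \<subseteq> {1..n}" using assms by auto
  then have "charfun n kappa (\<lambda>_. False) S
      = real (card {C. C \<subseteq> {1,2,3,4} - S \<and> kappa4 C}) / 2 ^ card ({1,2,3,4} - S)"
    by (rule charfun_junta) (simp add: kappa_def)
  also have "\<dots> = kappa_mean (1 \<in> S) (2 \<in> S) (3 \<in> S) (4 \<in> S)"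
    unfolding card_1234_Diff by (subst card_kappa4_witnesses) (auto simp: kappa_mean_def)
  finally show ?thesis .
qed

lemma kappa_mean_mono_2: "kappa_mean a False c d \<le> kappa_mean a True c d"
  by (cases a; cases c; cases d) (simp_all add: kappa_mean_def)

lemma kappa_mean_swap_1_4_negates_3:
  "kappa_mean d b True a - kappa_mean d b False a = - (kappa_mean a b True d - kappa_mean a b False d)"
  by (cases a; cases b; cases d) (simp_all add: kappa_mean_def)

lemma shap_kappa_2_pos:
  assumes "n \<ge> 4"
  shows "shap n kappa (\<lambda>_. False) 2 > 0"
  unfolding shap_def
proof (rule sum_pos2[where i = "{}"])
  have marginal: "charfun n kappa (\<lambda>_. False) (S \<union> {2}) - charfun n kappa (\<lambda>_. False) S
      = kappa_mean (1 \<in> S) True (3 \<in> S) (4 \<in> S) - kappa_mean (1 \<in> S) False (3 \<in> S) (4 \<in> S)"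
    if "S \<subseteq> feats n - {2}" for S
  proof -
    have "2 \<notin> S" using that by blast
    then show ?thesis by (simp add: charfun_kappa[OF assms])
  qed
  show "finite (Pow (feats n - {2}))" by (simp add: feats_def)
  show "{} \<in> Pow (feats n - {2})" by simp
  show "0 < fact (card {}) * fact (n - card {} - 1) / fact n *
      (charfun n kappa (\<lambda>_. False) ({} \<union> {2}) - charfun n kappa (\<lambda>_. False) {})"
    unfolding marginal[OF empty_subsetI] by (simp add: kappa_mean_def)
  show "0 \<le> fact (card S) * fact (n - card S - 1) / fact n *
      (charfun n kappa (\<lambda>_. False) (S \<union> {2}) - charfun n kappa (\<lambda>_. False) S)"
    if "S \<in> Pow (feats n - {2})" for S
    unfolding marginal[OF that[unfolded Pow_iff]]
    by (intro mult_nonneg_nonneg) (simp_all add: kappa_mean_mono_2)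
qed

lemma shap_kappa_3_eq_0:
  assumes "n \<ge> 4"
  shows "shap n kappa (\<lambda>_. False) 3 = 0"
proof (rule shap_eq_0_if_transpose_negates_marginals[where a = 1 and b = 4])
  show "1 \<in> feats n - {3}" "4 \<in> feats n - {3}" using assms by (auto simp: feats_def)
  fix S assume "S \<subseteq> feats n - {3}"
  then have "3 \<notin> S" by blast
  let ?S' = "transpose 1 4 ` S"
  have "(1 \<in> ?S') = (4 \<in> S)" "(2 \<in> ?S') = (2 \<in> S)" "(3 \<in> ?S') = (3 \<in> S)"
    "(4 \<in> ?S') = (1 \<in> S)"
    by (simp_all add: in_transpose_image_iff)
  then show "charfun n kappa (\<lambda>_. False) (?S' \<union> {3}) - charfun n kappa (\<lambda>_. False) ?S'
      = - (charfun n kappa (\<lambda>_. False) (S \<union> {3}) - charfun n kappa (\<lambda>_. False) S)"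
    using \<open>3 \<notin> S\<close> kappa_mean_swap_1_4_negates_3[of "1 \<in> S" "2 \<in> S" "4 \<in> S"]
    by (simp add: charfun_kappa[OF assms])
qed

lemma kappa_values:
  "\<not> kappa (\<lambda>_. False)" "kappa (\<lambda>j. j = 1)" "kappa (\<lambda>j. j = 3 \<or> j = 4)"
  by (simp_all add: kappa_def kappa4_def)

lemma AXp_kappa_1_3:
  assumes "n \<ge> 4"
  shows "AXp n kappa (\<lambda>_. False) {1,3}"
proof -
  have v: "(\<lambda>_. False) \<in> points n" by (simp add: points_def)
  have "WAXp n kappa (\<lambda>_. False) {1,3}"
    unfolding WAXp_iff[OF v] using assms by (auto simp: feats_def Upsilon_def kappa_def kappa4_def)
  moreover have "\<not> WAXp n kappa (\<lambda>_. False) {3}"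
  proof -
    have "(\<lambda>j. j = 1) \<in> Upsilon n {3} (\<lambda>_. False)"
      using assms by (auto simp: Upsilon_def points_def)
    then show ?thesis unfolding WAXp_iff[OF v] using kappa_values by blast
  qed
  moreover have "\<not> WAXp n kappa (\<lambda>_. False) {1}"
  proof -
    have "(\<lambda>j. j = 3 \<or> j = 4) \<in> Upsilon n {1} (\<lambda>_. False)"
      using assms by (auto simp: Upsilon_def points_def)
    then show ?thesis unfolding WAXp_iff[OF v] using kappa_values by blast
  qed
  ultimately show ?thesis unfolding AXp_def by (auto simp: insert_Diff_if)
qed

theorem proposition3:
  fixes n :: nat
  assumes "even n" and "n \<ge> 4"
  shows "\<exists>\<kappa> v. is_classifier n \<kappa> \<and> v \<in> points n \<and>
           (\<exists>i1\<in>feats n. \<not> relevant n \<kappa> v i1 \<and> shap n \<kappa> v i1 \<noteq> 0 \<and>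
              (\<exists>i2\<in>feats n - {i1}. relevant n \<kappa> v i2 \<and> shap n \<kappa> v i2 = 0))"
proof -
  let ?v = "\<lambda>_::nat. False"
  have v: "?v \<in> points n" by (simp add: points_def)
  have "(\<lambda>j. j = 1) \<in> points n" using assms(2) by (auto simp: points_def)
  then have "is_classifier n kappa"
    unfolding is_classifier_def using v kappa_values by blast
  moreover have "\<not> relevant n kappa ?v 2"
    using v by (rule not_relevant_if_deviation_keeps_prediction) (simp add: kappa_def kappa4_def)
  moreover have "relevant n kappa ?v 3"
    using AXp_kappa_1_3[OF assms(2)] unfolding relevant_def by blast
  moreover have "2 \<in> feats n" "3 \<in> feats n - {2}" using assms(2) by (auto simp: feats_def)
  ultimately show ?thesis
    using v shap_kappa_2_pos[OF assms(2)] shap_kappa_3_eq_0[OF assms(2)] by force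
qed

end
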